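(* Let $q$ be a power of $2$. In $\mathrm{AG}(3,q^2)\subset\mathrm{PG}(3,q^2)$, with affine coordinates $x,y,z$, homogeneous coordinates $J,X,Y,Z$ and plane at infinity $\Sigma_\infty: J=0$, let $\mathcal H$ be the Hermitian surface with affine equation $z^q+z=x^{q+1}+y^{q+1}$ and let $\mathcal Q$ be an irreducible quadric with affine equation $z=ax^2+by^2+cxy+dx+ey+f$, where $a,b,c,d,e,f\in\mathrm{GF}(q^2)$. Let $\mathcal C_\infty=\mathcal Q\cap\mathcal H\cap\Sigma_\infty$. If $\mathcal Q$ is a quadratic cone, then $\mathcal C_\infty$ consists either of $1$ point or of $q^2+1$ points on a line. If $\mathcal Q$ is a hyperbolic quadric, then $\mathcal C_\infty$ consists either of $1$ point, or of $q^2+1$ points on a line, or of $2q^2+1$ points on two lines. All these cases actually occur.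
   Context: Here $P_\infty=(0,0,0,1)$ lies on both $\mathcal H$ and $\mathcal Q$, and $\Sigma_\infty$ is the common tangent plane of $\mathcal H$ and $\mathcal Q$ at $P_\infty$. A quadratic cone is the quadric projecting an irreducible conic in a plane from a vertex not on that plane. *)

theory Defs
  imports "HOL-Analysis.Analysis"
begin

text \<open>Homogeneous coordinates of PG(3,F) are vectors in F^4, indexed by the
  numeral type 4; component 0 is J, 1 is X, 2 is Y, 3 is Z.
  Affine points: x = X/J, y = Y/J, z = Z/J; plane at infinity J = 0.\<close>

definition proj :: "'a::field ^ 'n \<Rightarrow> ('a ^ 'n) set" where
  "proj v = {k *s v | k. k \<noteq> 0}"

text \<open>Set of projective points whose homogeneous coordinates satisfy P
  (P is meant to be homogeneous, i.e. invariant under nonzero scaling).\<close>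
definition pts :: "('a::field ^ 4 \<Rightarrow> bool) \<Rightarrow> ('a ^ 4) set set" where
  "pts P = {proj v | v. v \<noteq> 0 \<and> P v}"

definition join :: "'a::field ^ 4 \<Rightarrow> 'a ^ 4 \<Rightarrow> ('a ^ 4) set set" where
  "join u w = {proj (s *s u + t *s w) | s t. (s, t) \<noteq> (0, 0)}"

definition is_line :: "('a::field ^ 4) set set \<Rightarrow> bool" where
  "is_line L \<longleftrightarrow> (\<exists>u w. (\<forall>s t. s *s u + t *s w = 0 \<longrightarrow> s = 0 \<and> t = 0) \<and> L = join u w)"

text \<open>A plane of PG(3,F) is the image
  of PG(2,F) under an injective linear map L : F^3 \<rightarrow> F^4, and every irreducible
  conic of that plane is, in suitable coordinates of the plane, u0 u1 = u2^2.\<close>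
definition is_quadratic_cone :: "('a::field ^ 4) set set \<Rightarrow> bool" where
  "is_quadratic_cone S \<longleftrightarrow>
     (\<exists>(L :: 'a ^ 3 ^ 4) V. inj (\<lambda>u. L *v u) \<and> (\<forall>u. L *v u \<noteq> V) \<and>
        S = \<Union> {join V (L *v u) | u. u \<noteq> 0 \<and> u $ 0 * u $ 1 = (u $ 2) ^ 2})"

definition is_hyperbolic_quadric :: "('a::field ^ 4) set set \<Rightarrow> bool" where
  "is_hyperbolic_quadric S \<longleftrightarrow>
     (\<exists>M :: 'a ^ 4 ^ 4. det M \<noteq> 0 \<and>
        S = {proj (M *v v) | v. v \<noteq> 0 \<and> v $ 0 * v $ 1 + v $ 2 * v $ 3 = 0})"

definition Qform :: "'a::field \<Rightarrow> 'a \<Rightarrow> 'a \<Rightarrow> 'a \<Rightarrow> 'a \<Rightarrow> 'a \<Rightarrow> 'a ^ 4 \<Rightarrow> 'a" where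
  "Qform a b c d e f v =
     a * (v$1)^2 + b * (v$2)^2 + c * v$1 * v$2 + d * v$1 * v$0 + e * v$2 * v$0
     + f * (v$0)^2 - v$3 * v$0"

text \<open>Coefficients of the quadratic form Qform: K i i is the coefficient of V_i^2,
  K i j (i \<noteq> j, symmetric) is the coefficient of V_i V_j.\<close>
definition Qcoef :: "'a::field \<Rightarrow> 'a \<Rightarrow> 'a \<Rightarrow> 'a \<Rightarrow> 'a \<Rightarrow> 'a \<Rightarrow> 4 \<Rightarrow> 4 \<Rightarrow> 'a" where
  "Qcoef a b c d e f i j =
     (if {i, j} = {0} then f else if {i, j} = {1} then a else if {i, j} = {2} then b
      else if {i, j} = {0, 1} then d else if {i, j} = {0, 2} then e
      else if {i, j} = {1, 2} then c else if {i, j} = {0, 3} then -1 else 0)"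

text \<open>A quadratic form with coefficients K is irreducible over F iff it is not the
  product of two linear forms with coefficients in F (comparison of coefficients).\<close>
definition irreducible_qform :: "(4 \<Rightarrow> 4 \<Rightarrow> 'a::field) \<Rightarrow> bool" where
  "irreducible_qform K \<longleftrightarrow>
     \<not> (\<exists>l m :: 'a ^ 4. \<forall>i j. K i j = (if i = j then l$i * m$i else l$i * m$j + l$j * m$i))"

definition Hform :: "nat \<Rightarrow> 'a::field ^ 4 \<Rightarrow> 'a" where
  "Hform q v = (v$3)^q * v$0 + v$3 * (v$0)^q - (v$1)^(q+1) - (v$2)^(q+1)"

definition C_infty :: "nat \<Rightarrow> 'a::field \<Rightarrow> 'a \<Rightarrow> 'a \<Rightarrow> 'a \<Rightarrow> 'a \<Rightarrow> 'a \<Rightarrow> ('a ^ 4) set set" where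
  "C_infty q a b c d e f =
     pts (\<lambda>v. v$0 = 0 \<and> Qform a b c d e f v = 0 \<and> Hform q v = 0)"

end

(*
  On the plane at infinity J = 0 the equations of Q and H reduce to
  a X^2 + c XY + b Y^2 = 0 and X^(q+1) + Y^(q+1) = 0.  The point P_infty is the only
  solution with Y = 0; every other point is (0 : t : 1 : z) with z arbitrary and t a
  common root of a t^2 + c t + b and t^(q+1) + 1.  So C_infty consists of P_infty and of
  q^2 further points on the line joining P_infty to (0 : t : 1 : 0) for each such slope t.
  Irreducibility of Q means exactly (a, b, c) <> 0, so there are at most two slopes.
  For a cone in characteristic 2 the vertex lies in the radical of the polar form, which
  forces c = 0; since squaring is injective in characteristic 2, a t^2 + b then has at
  most one root.  Explicit cones and hyperbolic quadrics realise all cases; the two-line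
  case uses an element t0 <> 1 with t0^(q+1) = 1, a (q-1)-th power in GF(q^2).
*)
theory Submission
  imports Defs "HOL-Computational_Algebra.Polynomial"
begin

definition vec4 :: "'a \<Rightarrow> 'a \<Rightarrow> 'a \<Rightarrow> 'a \<Rightarrow> 'a^4" where
  "vec4 j x y z = (\<chi> i. if i = 0 then j else if i = 1 then x else if i = 2 then y else z)"

lemma vec4_nth [simp]:
  "vec4 j x y z $ 0 = j" "vec4 j x y z $ 1 = x" "vec4 j x y z $ 2 = y" "vec4 j x y z $ 3 = z"
  by (simp_all add: vec4_def)

lemma forall_4_zero_based: "(\<forall>i::4. P i) \<longleftrightarrow> P 0 \<and> P 1 \<and> P 2 \<and> P 3"
proof -
  have "(4::4) = 0" by simp
  with forall_4[of P] show ?thesis by auto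
qed

lemma sum_4_zero_based: "sum f (UNIV::4 set) = f 0 + f 1 + f 2 + f 3"
proof -
  have "(4::4) = 0" by simp
  with sum_4[of f] show ?thesis by (simp add: ac_simps)
qed

lemma vec4_eq_iff: "(u::'a^4) = v \<longleftrightarrow> u$0 = v$0 \<and> u$1 = v$1 \<and> u$2 = v$2 \<and> u$3 = v$3"
  by (simp add: vec_eq_iff forall_4_zero_based)

definition vec3 :: "'a \<Rightarrow> 'a \<Rightarrow> 'a \<Rightarrow> 'a^3" where
  "vec3 x y z = (\<chi> i. if i = 0 then x else if i = 1 then y else z)"

lemma vec3_nth [simp]: "vec3 x y z $ 0 = x" "vec3 x y z $ 1 = y" "vec3 x y z $ 2 = z"
  by (simp_all add: vec3_def)

lemma sum_3_zero_based: "sum f (UNIV::3 set) = f 0 + f 1 + f 2"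
proof -
  have "(3::3) = 0" by simp
  with sum_3[of f] show ?thesis by (simp add: ac_simps)
qed

lemma vec3_eq_iff: "(u::'a^3) = v \<longleftrightarrow> u$0 = v$0 \<and> u$1 = v$1 \<and> u$2 = v$2"
proof -
  have "(3::3) = 0" by simp
  with forall_3[of "\<lambda>i. u$i = v$i"] show ?thesis by (auto simp: vec_eq_iff)
qed

lemma proj_self: "v \<in> proj v"
  unfolding proj_def by (auto intro!: exI[of _ 1])

lemma proj_eqD: "proj u = proj v \<Longrightarrow> \<exists>k. k \<noteq> 0 \<and> u = k *s v"
  using proj_self[of u] by (auto simp: proj_def)

lemma proj_smult:
  assumes "k \<noteq> 0"
  shows "proj (k *s v) = proj v"
proof -
  have "m *s (k *s v) \<in> proj v" if "m \<noteq> 0" for m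
    using that assms unfolding proj_def by (auto intro!: exI[of _ "m * k"])
  moreover have "m *s v \<in> proj (k *s v)" if "m \<noteq> 0" for m
    using that assms unfolding proj_def by (auto intro!: exI[of _ "m / k"])
  ultimately show ?thesis
    unfolding proj_def by blast
qed

lemma proj_mem_pts_iff:
  assumes "\<And>k v. k \<noteq> 0 \<Longrightarrow> P (k *s v) = P v"
  shows "proj w \<in> pts P \<longleftrightarrow> w \<noteq> 0 \<and> P w"
proof
  assume "proj w \<in> pts P"
  then obtain v where "proj w = proj v" "v \<noteq> 0" "P v"
    unfolding pts_def by auto
  moreover from this obtain k where "k \<noteq> 0" "w = k *s v"
    using proj_eqD by blast
  ultimately show "w \<noteq> 0 \<and> P w"
    using assms by simp
next
  assume "w \<noteq> 0 \<and> P w"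
  then show "proj w \<in> pts P"
    unfolding pts_def by blast
qed

lemma proj_mem_join: "(s, t) \<noteq> (0, 0) \<Longrightarrow> proj (s *s u + t *s w) \<in> join u w"
  unfolding join_def by blast

lemma Qform_smult: "Qform a b c d e f (k *s v) = k^2 * Qform a b c d e f v"
  by (simp add: Qform_def power2_eq_square algebra_simps)

lemma Hform_smult: "Hform q (k *s v) = k^(q+1) * Hform q v"
  by (simp add: Hform_def algebra_simps)

section \<open>The points of \<open>C_infty\<close>\<close>

text \<open>Off \<open>P_infty = (0,0,0,1)\<close>, the points of \<open>C_infty\<close> are \<open>(0,t,1,z)\<close> with \<open>t\<close> in this set.\<close>

definition inf_slopes :: "nat \<Rightarrow> 'a::field \<Rightarrow> 'a \<Rightarrow> 'a \<Rightarrow> 'a set" where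
  "inf_slopes q a b c = {t. a*t^2 + c*t + b = 0 \<and> t^(q+1) + 1 = 0}"

lemma Qform_at_infinity: "v$0 = 0 \<Longrightarrow> Qform a b c d e f v = a*(v$1)^2 + c*(v$1)*(v$2) + b*(v$2)^2"
  by (simp add: Qform_def algebra_simps)

lemma Hform_at_infinity_eq_0_iff:
  assumes "q > 0" "v$0 = 0"
  shows "Hform q v = 0 \<longleftrightarrow> (v$1)^(q+1) + (v$2)^(q+1) = 0"
proof -
  have "Hform q v = - ((v$1)^(q+1) + (v$2)^(q+1))"
    using assms by (simp add: Hform_def zero_power)
  then show ?thesis
    by (simp only: neg_equal_0_iff_equal)
qed

lemma C_infty_eq:
  fixes a b c d e f :: "'a::field"
  assumes "q > 0"
  shows "C_infty q a b c d e f = insert (proj (vec4 0 0 0 1))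
     ((\<lambda>(t, z). proj (vec4 0 t 1 z)) ` (inf_slopes q a b c \<times> UNIV))"
proof -
  let ?P = "\<lambda>v. v$0 = 0 \<and> Qform a b c d e f v = 0 \<and> Hform q v = (0::'a)"
  have scale: "?P (k *s v) \<longleftrightarrow> ?P v" if "k \<noteq> 0" for k v
    using that by (simp add: Qform_smult Hform_smult)
  have P_slope: "?P (vec4 0 t 1 z) \<longleftrightarrow> t \<in> inf_slopes q a b c" for t z
    using assms by (auto simp: inf_slopes_def Qform_at_infinity Hform_at_infinity_eq_0_iff)
  have P_infty: "?P (vec4 0 0 0 1)"
    using assms by (simp add: Qform_at_infinity Hform_at_infinity_eq_0_iff)
  have "proj v \<in> insert (proj (vec4 0 0 0 1)) ((\<lambda>(t, z). proj (vec4 0 t 1 z)) ` (inf_slopes q a b c \<times> UNIV))"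
    if "v \<noteq> 0" "?P v" for v
  proof (cases "v$2 = 0")
    case True
    with that assms have "v = v$3 *s vec4 0 0 0 1" "v$3 \<noteq> 0"
      by (auto simp: vec4_eq_iff Qform_at_infinity Hform_at_infinity_eq_0_iff)
    then show ?thesis
      by (metis insertI1 proj_smult)
  next
    case False
    define w where "w = vec4 0 (v$1 / v$2) 1 (v$3 / v$2)"
    have "v = v$2 *s w"
      using False \<open>?P v\<close> by (simp add: w_def vec4_eq_iff)
    then have "proj v = proj w"
      using False by (metis proj_smult)
    moreover have "v$1 / v$2 \<in> inf_slopes q a b c"
      using \<open>v = v$2 *s w\<close> False scale[of "v$2" w] \<open>?P v\<close> P_slope unfolding w_def by metis
    ultimately show ?thesis
      unfolding w_def by blast
  qed
  moreover have "vec4 0 0 0 1 \<noteq> (0::'a^4)" "vec4 0 t 1 z \<noteq> (0::'a^4)" for t z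
    by (simp_all add: vec4_eq_iff)
  ultimately show ?thesis
    unfolding C_infty_def pts_def using P_slope P_infty by fast
qed

lemma card_C_infty:
  fixes a b c d e f :: "'a::field"
  assumes "q > 0" "finite (UNIV :: 'a set)"
  shows "card (C_infty q a b c d e f) = card (inf_slopes q a b c) * CARD('a) + 1"
proof -
  let ?g = "\<lambda>(t::'a, z). proj (vec4 0 t 1 z)"
  let ?A = "inf_slopes q a b c \<times> (UNIV :: 'a set)"
  have "inj ?g"
  proof (rule injI, clarify)
    fix t z t' z' :: 'a
    assume "proj (vec4 0 t 1 z) = proj (vec4 0 t' 1 z')"
    then obtain k where "vec4 0 t 1 z = k *s vec4 0 t' 1 z'"
      using proj_eqD by blast
    then show "t = t' \<and> z = z'"
      by (simp add: vec4_eq_iff)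
  qed
  moreover have "proj (vec4 0 0 0 1) \<notin> ?g ` ?A"
    by (auto simp: vec4_eq_iff dest!: proj_eqD)
  moreover have "finite ?A"
    by (intro finite_cartesian_product finite_subset[OF subset_UNIV assms(2)] assms(2))
  ultimately have "card (C_infty q a b c d e f) = Suc (card ?A)"
    using assms(1) by (simp add: C_infty_eq card_image inj_on_subset)
  then show ?thesis
    by (simp add: card_cartesian_product)
qed

definition line_through_P_infty :: "'a::field \<Rightarrow> ('a^4) set set" where
  "line_through_P_infty t = join (vec4 0 0 0 1) (vec4 0 t 1 0)"

lemma is_line_line_through_P_infty: "is_line (line_through_P_infty t)"
  unfolding is_line_def line_through_P_infty_def
  by (intro exI[of _ "vec4 0 0 0 1"] exI[of _ "vec4 0 t 1 0"]) (simp add: vec4_eq_iff)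

lemma mem_line_through_P_infty:
  fixes t z :: "'a::field"
  shows "proj (vec4 0 0 0 1) \<in> line_through_P_infty t" "proj (vec4 0 t 1 z) \<in> line_through_P_infty t"
proof -
  have "vec4 0 0 0 1 = 1 *s vec4 0 0 0 1 + 0 *s vec4 0 t 1 0"
       "vec4 0 t 1 z = z *s vec4 0 0 0 1 + 1 *s vec4 0 t 1 0"
    by (simp_all add: vec4_eq_iff)
  then show "proj (vec4 0 0 0 1) \<in> line_through_P_infty t" "proj (vec4 0 t 1 z) \<in> line_through_P_infty t"
    unfolding line_through_P_infty_def by (metis proj_mem_join prod.inject zero_neq_one)+
qed

lemma C_infty_subset_lines:
  assumes "q > 0" "t \<in> inf_slopes q a b c"
  shows "C_infty q a b c d e f \<subseteq> (\<Union>t\<in>inf_slopes q a b c. line_through_P_infty t)"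
  using assms mem_line_through_P_infty by (auto simp: C_infty_eq)

lemma C_infty_no_slope:
  assumes "q > 0" "inf_slopes q a b c = {}"
  shows "card (C_infty q a b c d e f) = 1"
  using assms by (simp add: C_infty_eq)

lemma C_infty_one_slope:
  assumes "q > 0" "finite (UNIV :: 'a::field set)" "inf_slopes q a b c = {t :: 'a}"
  shows "card (C_infty q a b c d e f) = CARD('a) + 1 \<and>
    (\<exists>L. is_line L \<and> C_infty q a b c d e f \<subseteq> L)"
proof
  show "card (C_infty q a b c d e f) = CARD('a) + 1"
    using card_C_infty[OF assms(1,2)] assms(3) by simp
  have "C_infty q a b c d e f \<subseteq> line_through_P_infty t"
    using C_infty_subset_lines[OF assms(1), of t a b c d e f] assms(3) by simp
  then show "\<exists>L. is_line L \<and> C_infty q a b c d e f \<subseteq> L"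
    using is_line_line_through_P_infty by blast
qed

lemma C_infty_two_slopes:
  assumes "q > 0" "finite (UNIV :: 'a::field set)" "inf_slopes q a b c = {t1 :: 'a, t2}" "t1 \<noteq> t2"
  shows "card (C_infty q a b c d e f) = 2 * CARD('a) + 1 \<and>
    (\<exists>L1 L2. is_line L1 \<and> is_line L2 \<and> C_infty q a b c d e f \<subseteq> L1 \<union> L2)"
proof
  show "card (C_infty q a b c d e f) = 2 * CARD('a) + 1"
    using card_C_infty[OF assms(1,2)] assms(3,4) by simp
  have "C_infty q a b c d e f \<subseteq> line_through_P_infty t1 \<union> line_through_P_infty t2"
    using C_infty_subset_lines[OF assms(1), of t1 a b c d e f] assms(3) by simp
  then show "\<exists>L1 L2. is_line L1 \<and> is_line L2 \<and> C_infty q a b c d e f \<subseteq> L1 \<union> L2"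
    using is_line_line_through_P_infty by blast
qed

section \<open>Characteristic 2\<close>

text \<open>Translation by 1 permutes the field, so it fixes the sum of all elements: \<open>CARD('a) \<cdot> 1 = 0\<close>.\<close>
lemma two_eq_0_if_card_eq_power_2:
  assumes "finite (UNIV :: 'a::field set)" "CARD('a) = 2 ^ n"
  shows "(2::'a) = 0"
proof -
  have "(\<Sum>x\<in>UNIV. x + 1) = (\<Sum>x::'a\<in>UNIV. x)"
    by (rule sum.reindex_bij_witness[of _ "\<lambda>x. x - 1" "\<lambda>x. x + 1"]) auto
  then have "of_nat CARD('a) = (0::'a)"
    by (simp add: sum.distrib)
  with assms show ?thesis
    by simp
qed

lemma char_2_add_eq_0_iff:
  assumes "(2::'a::field) = 0"
  shows "x + y = 0 \<longleftrightarrow> x = (y::'a)"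
proof -
  have "y + y = 0"
    using assms by (metis mult_2 mult_zero_left)
  then show ?thesis
    by (metis add_right_cancel)
qed

lemma char_2_power2_eq_iff:
  assumes "(2::'a::field) = 0"
  shows "x^2 = y^2 \<longleftrightarrow> x = (y::'a)"
proof -
  have "(x - y)^2 = x^2 - y^2 + 2*(y^2 - x*y)"
    by (simp add: algebra_simps power2_eq_square)
  with assms have "x^2 - y^2 = (x - y)^2"
    by simp
  have "x^2 = y^2 \<longleftrightarrow> x^2 - y^2 = 0"
    by (rule right_minus_eq[symmetric])
  also have "\<dots> \<longleftrightarrow> x = y"
    unfolding \<open>x^2 - y^2 = (x - y)^2\<close> by simp
  finally show ?thesis .
qed

lemma power_card_minus_1_eq_1:
  assumes "finite (UNIV :: 'a::field set)" "(x::'a) \<noteq> 0"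
  shows "x ^ (CARD('a) - 1) = 1"
proof -
  let ?N = "UNIV - {0::'a}"
  have "x ^ card ?N * prod id ?N = (\<Prod>y\<in>?N. x * y)"
    by (simp add: prod.distrib)
  also have "\<dots> = prod id ?N"
    by (rule prod.reindex_bij_witness[of _ "\<lambda>y. y / x" "\<lambda>y. x * y"]) (use assms in auto)
  finally have "x ^ card ?N = 1"
    using assms(1) by (simp add: prod_zero_iff)
  moreover have "card ?N = CARD('a) - 1"
    using assms(1) by (simp add: card_Diff_singleton)
  ultimately show ?thesis
    by simp
qed

text \<open>The \<open>(q-1)\<close>-th power of an element outside the roots of \<open>x^(q-1) - 1\<close> has norm 1.\<close>
lemma exists_norm_1_ne_1:
  assumes fin: "finite (UNIV :: 'a::field set)" and card: "CARD('a) = q^2" and "q \<ge> 2"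
  shows "\<exists>t::'a. t^(q+1) = 1 \<and> t \<noteq> 1"
proof -
  let ?p = "monom (1::'a) (q - 1) - 1"
  have "coeff ?p (q - 1) = 1"
    using \<open>q \<ge> 2\<close> by (simp add: coeff_monom)
  then have "?p \<noteq> 0"
    by (metis coeff_0 zero_neq_one)
  moreover have "degree ?p \<le> q - 1"
    by (rule order.trans[OF degree_diff_le_max]) (simp add: degree_monom_eq)
  moreover have "{x. poly ?p x = 0} = {x. x^(q-1) = 1}"
    by (simp add: poly_monom)
  ultimately have "card {x::'a. x^(q-1) = 1} \<le> q - 1"
    using card_poly_roots_bound[of ?p] by simp
  also have "q - 1 < q^2 - 1"
  proof -
    have "q < q * q"
      using \<open>q \<ge> 2\<close> mult_strict_left_mono[of 1 q q] by simp
    then show ?thesis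
      unfolding power2_eq_square using \<open>q \<ge> 2\<close> by (intro diff_less_mono) auto
  qed
  also have "q^2 - 1 = card (UNIV - {0::'a})"
    using fin card by (simp add: card_Diff_singleton)
  finally have "\<not> UNIV - {0} \<subseteq> {x::'a. x^(q-1) = 1}"
    using card_mono[OF finite_subset[OF subset_UNIV fin]] by (meson leD)
  then obtain x :: 'a where x: "x \<noteq> 0" "x^(q-1) \<noteq> 1"
    by blast
  have "(q - 1) * (q + 1) = CARD('a) - 1"
    using card \<open>q \<ge> 2\<close> by (simp add: power2_eq_square algebra_simps)
  then have "(x^(q-1))^(q+1) = 1"
    using power_card_minus_1_eq_1[OF fin x(1)] by (simp only: power_mult[symmetric])
  with x(2) show ?thesis
    by blast
qed

lemma card_quadratic_roots_le_2:
  fixes a b c :: "'a::field"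
  assumes "\<not> (a = 0 \<and> b = 0 \<and> c = 0)"
  shows "finite {t. a*t^2 + c*t + b = 0} \<and> card {t. a*t^2 + c*t + b = 0} \<le> 2"
proof -
  let ?p = "[:b, c, a:]"
  have nz: "?p \<noteq> 0"
    using assms by auto
  have "degree ?p \<le> 2"
    by auto
  moreover have "{t. a*t^2 + c*t + b = 0} = {t. poly ?p t = 0}"
    by (simp add: algebra_simps power2_eq_square)
  ultimately show ?thesis
    using poly_roots_finite[OF nz] card_poly_roots_bound[OF nz] by auto
qed

lemma card_char_2_roots_le_1:
  fixes a b :: "'a::field"
  assumes "(2::'a) = 0" "\<not> (a = 0 \<and> b = 0)"
  shows "card {t. a*t^2 + b = 0} \<le> 1"
proof -
  have "t1 = t2" if "a*t1^2 + b = 0" "a*t2^2 + b = 0" for t1 t2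
  proof -
    have "a \<noteq> 0"
      using that assms(2) by auto
    moreover have "a*t1^2 = -b" "a*t2^2 = -b"
      using that by (simp_all add: eq_neg_iff_add_eq_0)
    ultimately have "t1^2 = t2^2"
      using mult_left_cancel by metis
    with assms(1) show ?thesis
      by (simp add: char_2_power2_eq_iff)
  qed
  moreover have "finite {t. a*t^2 + b = 0}"
    using card_quadratic_roots_le_2[of a b 0] assms(2) by simp
  ultimately show ?thesis
    by (simp add: card_le_Suc0_iff_eq)
qed

section \<open>Irreducibility and cones\<close>

lemma Qcoef_simps:
  "Qcoef a b c d e f 0 0 = f" "Qcoef a b c d e f 1 1 = a" "Qcoef a b c d e f 2 2 = b"
  "Qcoef a b c d e f 3 3 = 0" "Qcoef a b c d e f 0 1 = d" "Qcoef a b c d e f 1 0 = d"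
  "Qcoef a b c d e f 0 2 = e" "Qcoef a b c d e f 2 0 = e" "Qcoef a b c d e f 0 3 = -1"
  "Qcoef a b c d e f 3 0 = -1" "Qcoef a b c d e f 1 2 = c" "Qcoef a b c d e f 2 1 = c"
  "Qcoef a b c d e f 1 3 = 0" "Qcoef a b c d e f 3 1 = 0" "Qcoef a b c d e f 2 3 = 0"
  "Qcoef a b c d e f 3 2 = 0"
  by (simp_all add: Qcoef_def doubleton_eq_iff)

text \<open>If \<open>a = b = c = 0\<close> the form is \<open>J (dX + eY + fJ - Z)\<close>; conversely a factorisation
  \<open>l m\<close> has \<open>l$3 = 0\<close> or \<open>m$3 = 0\<close>, and the coefficients of \<open>ZX, ZY\<close> then kill \<open>a, b, c\<close>.\<close>
lemma irreducible_qform_Qcoef_iff: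
  fixes a b c d e f :: "'a::field"
  shows "irreducible_qform (Qcoef a b c d e f) \<longleftrightarrow> \<not> (a = 0 \<and> b = 0 \<and> c = 0)"
proof
  assume "irreducible_qform (Qcoef a b c d e f)"
  moreover have "\<forall>i j. Qcoef 0 0 0 d e f i j = (if i = j then vec4 1 0 0 0 $ i * vec4 f d e (-1) $ i
      else vec4 1 0 0 0 $ i * vec4 f d e (-1) $ j + vec4 1 0 0 0 $ j * vec4 f d e (-1) $ i)"
    by (simp add: forall_4_zero_based Qcoef_simps)
  ultimately show "\<not> (a = 0 \<and> b = 0 \<and> c = 0)"
    unfolding irreducible_qform_def by blast
next
  assume abc: "\<not> (a = 0 \<and> b = 0 \<and> c = 0)"
  show "irreducible_qform (Qcoef a b c d e f)"
    unfolding irreducible_qform_def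
  proof
    assume "\<exists>l m :: 'a^4. \<forall>i j. Qcoef a b c d e f i j =
      (if i = j then l$i * m$i else l$i * m$j + l$j * m$i)"
    then obtain l m :: "'a^4" where lm: "\<And>i j. Qcoef a b c d e f i j =
      (if i = j then l$i * m$i else l$i * m$j + l$j * m$i)"
      by blast
    have "l$3 * m$3 = 0" "l$0 * m$3 + l$3 * m$0 = -1"
      "l$1 * m$3 + l$3 * m$1 = 0" "l$2 * m$3 + l$3 * m$2 = 0"
      "a = l$1 * m$1" "b = l$2 * m$2" "c = l$1 * m$2 + l$2 * m$1"
      using lm[of 3 3] lm[of 0 3] lm[of 1 3] lm[of 2 3] lm[of 1 1] lm[of 2 2] lm[of 1 2]
      by (simp_all add: Qcoef_simps)
    with abc show False
      by (cases "l$3 = 0") auto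
  qed
qed

lemma quadratic_cone_vertex:
  assumes cone: "is_quadratic_cone (pts P)"
    and hom: "\<And>k v. k \<noteq> 0 \<Longrightarrow> P (k *s v) = P v" and "P 0"
  obtains V where "V \<noteq> 0" "P V" "\<And>w. P w \<Longrightarrow> P (V + w)"
proof -
  obtain L :: "'a^3^4" and V where L_ne_V: "\<forall>u. L *v u \<noteq> V"
    and S: "pts P = \<Union> {join V (L *v u) | u. u \<noteq> 0 \<and> u $ 0 * u $ 1 = (u $ 2) ^ 2}"
    using cone unfolding is_quadratic_cone_def by blast
  have P_join: "P (s *s V + t *s (L *v u))"
    if "u \<noteq> 0" "u $ 0 * u $ 1 = (u $ 2) ^ 2" "s *s V + t *s (L *v u) \<noteq> 0" for s t u
  proof -
    have "(s, t) \<noteq> (0, 0)"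
      using that(3) by auto
    then have "proj (s *s V + t *s (L *v u)) \<in> pts P"
      using that(1,2) unfolding S join_def by blast
    then show ?thesis
      using proj_mem_pts_iff[OF hom] by blast
  qed
  have "V \<noteq> 0"
    using L_ne_V by (metis matrix_vector_mult_0_right)
  moreover have "P V"
    using P_join[of "vec3 1 0 0" 1 0] \<open>V \<noteq> 0\<close> by (simp add: vec3_eq_iff)
  moreover have "P (V + w)" if "P w" for w
  proof (cases "w = 0 \<or> V + w = 0")
    case True
    then show ?thesis
      using \<open>P V\<close> \<open>P 0\<close> by auto
  next
    case False
    then have "proj w \<in> pts P"
      using that unfolding pts_def by blast
    then obtain u s t where u: "u \<noteq> 0" "u $ 0 * u $ 1 = (u $ 2) ^ 2"
      and "proj w = proj (s *s V + t *s (L *v u))"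
      unfolding S join_def by blast
    then obtain k where "w = k *s (s *s V + t *s (L *v u))"
      using proj_eqD by blast
    then have eq: "V + w = (1 + k * s) *s V + (k * t) *s (L *v u)"
      by (simp add: algebra_simps vector_smult_assoc)
    show ?thesis
      unfolding eq by (rule P_join[OF u]) (use False eq in simp)
  qed
  ultimately show ?thesis
    using that by blast
qed

lemma Qform_add_P_infty: "Qform a b c d e f (V + vec4 0 0 0 1) = Qform a b c d e f V - V$0"
  by (simp add: Qform_def algebra_simps power2_eq_square)

lemma Qform_add_affine:
  assumes "V$0 = 0"
  shows "Qform a b c d e f (V + vec4 1 x y z) = Qform a b c d e f V + Qform a b c d e f (vec4 1 x y z)
     + (x*(2*a*V$1 + c*V$2) + y*(2*b*V$2 + c*V$1) + (d*V$1 + e*V$2 - V$3))"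
  using assms by (simp add: Qform_def algebra_simps power2_eq_square)

text \<open>In characteristic 2 the polar form of \<open>Q\<close> pairs \<open>V = (0,X,Y,Z)\<close> with \<open>(1,x,y,z)\<close> to
  \<open>c(xY + yX) + dX + eY - Z\<close>. The vertex is polar to every point of the cone, so this
  vanishes for all \<open>x, y\<close>, and \<open>c \<noteq> 0\<close> would force \<open>V = 0\<close>.\<close>
lemma c_eq_0_if_Qform_quadratic_cone_char_2:
  fixes a b c d e f :: "'a::field"
  assumes cone: "is_quadratic_cone (pts (\<lambda>v. Qform a b c d e f v = 0))" and two: "(2::'a) = 0"
  shows "c = 0"
proof (rule ccontr)
  assume "c \<noteq> 0"
  let ?Q = "Qform a b c d e f"
  have hom: "?Q (k *s v) = 0 \<longleftrightarrow> ?Q v = 0" if "k \<noteq> 0" for k v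
    using that by (simp add: Qform_smult)
  have "?Q 0 = 0"
    by (simp add: Qform_def)
  obtain V where "V \<noteq> 0" "?Q V = 0" and vertex: "\<And>w. ?Q w = 0 \<Longrightarrow> ?Q (V + w) = 0"
    using quadratic_cone_vertex[OF cone hom \<open>?Q 0 = 0\<close>] by blast
  have "?Q (V + vec4 0 0 0 1) = 0"
    by (rule vertex) (simp add: Qform_def)
  then have V0: "V$0 = 0"
    using \<open>?Q V = 0\<close> by (simp add: Qform_add_P_infty)
  define K where "K = d*V$1 + e*V$2 - V$3"
  have lin: "x*(c*V$2) + y*(c*V$1) + K = 0" for x y
  proof -
    let ?w = "vec4 1 x y (a*x^2 + b*y^2 + c*x*y + d*x + e*y + f)"
    have "?Q ?w = 0"
      by (simp add: Qform_def)
    then have "x*(2*a*V$1 + c*V$2) + y*(2*b*V$2 + c*V$1) + K = 0"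
      using vertex[of ?w] \<open>?Q V = 0\<close> unfolding K_def Qform_add_affine[OF V0] by simp
    with two show ?thesis
      by simp
  qed
  have "K = 0" "c*V$2 = 0" "c*V$1 = 0"
    using lin[of 0 0] lin[of 1 0] lin[of 0 1] by simp_all
  then have "V = 0"
    using V0 \<open>c \<noteq> 0\<close> by (simp add: vec4_eq_iff K_def)
  with \<open>V \<noteq> 0\<close> show False ..
qed

section \<open>Model quadrics\<close>

lemma Qform_square: "Qform (\<alpha>^2) (\<beta>^2) (2*\<alpha>*\<beta>) 0 0 0 w = (\<alpha>*w$1 + \<beta>*w$2)^2 - w$3*w$0"
  by (simp add: Qform_def algebra_simps power2_eq_square)

text \<open>The cone with vertex \<open>V = (0,-\<beta>,\<alpha>,0)\<close> over the conic \<open>J Z = X^2\<close> of the plane \<open>Y = 0\<close>.\<close>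
lemma is_quadratic_cone_Qform_square:
  fixes \<alpha> \<beta> :: "'a::field"
  assumes "\<alpha> \<noteq> 0"
  shows "is_quadratic_cone (pts (\<lambda>v. Qform (\<alpha>^2) (\<beta>^2) (2*\<alpha>*\<beta>) 0 0 0 v = 0))"
proof -
  let ?Q = "Qform (\<alpha>^2) (\<beta>^2) (2*\<alpha>*\<beta>) 0 0 0"
  define L :: "'a^3^4" where "L = (\<chi> i j. if i = 0 \<and> j = 0 then 1 else if i = 1 \<and> j = 2 then 1/\<alpha>
      else if i = 3 \<and> j = 1 then 1 else 0)"
  define V where "V = vec4 0 (-\<beta>) \<alpha> 0"
  have L: "L *v u = vec4 (u$0) (u$2/\<alpha>) 0 (u$1)" for u
    by (simp add: vec4_eq_iff L_def matrix_vector_mult_def sum_3_zero_based)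
  have comb: "s *s V + t *s (L *v u) = vec4 (t*u$0) (t*u$2/\<alpha> - s*\<beta>) (s*\<alpha>) (t*u$1)" for s t u
    by (simp add: vec4_eq_iff L V_def)
  have Q_comb: "?Q (s *s V + t *s (L *v u)) = t^2 * ((u$2)^2 - u$0 * u$1)" for s t u
    unfolding comb Qform_square using assms by (simp add: field_simps power2_eq_square)
  let ?conic = "{u :: 'a^3. u \<noteq> 0 \<and> u$0 * u$1 = (u$2)^2}"
  have "pts (\<lambda>v. ?Q v = 0) = \<Union> {join V (L *v u) | u. u \<in> ?conic}"
  proof (intro equalityI subsetI)
    fix x assume "x \<in> pts (\<lambda>v. ?Q v = 0)"
    then obtain v where x: "x = proj v" and v: "v \<noteq> 0" "?Q v = 0"
      unfolding pts_def by blast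
    define u where "u = vec3 (v$0) (v$3) (\<alpha> * v$1 + \<beta> * v$2)"
    define s where "s = v$2 / \<alpha>"
    have v_eq: "v = s *s V + 1 *s (L *v u)"
      unfolding comb using assms by (simp add: vec4_eq_iff u_def s_def field_simps)
    show "x \<in> \<Union> {join V (L *v u) | u. u \<in> ?conic}"
    proof (cases "u = 0")
      case False
      have "u$0 * u$1 = (u$2)^2"
        using Q_comb[of s 1 u] v(2) v_eq by simp
      moreover have "x \<in> join V (L *v u)"
        unfolding x by (subst v_eq) (rule proj_mem_join, simp)
      ultimately show ?thesis
        using False by blast
    next
      case True
      then have "v = s *s V + 0 *s (L *v vec3 1 0 0)"
        using v_eq by simp
      moreover have "s \<noteq> 0"
        using True v_eq v(1) by auto
      ultimately have "x \<in> join V (L *v vec3 1 0 0)"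
        unfolding x by (metis proj_mem_join prod.inject)
      moreover have "vec3 1 0 0 \<in> ?conic"
        by (simp add: vec3_eq_iff)
      ultimately show ?thesis
        by blast
    qed
  next
    fix x assume "x \<in> \<Union> {join V (L *v u) | u. u \<in> ?conic}"
    then obtain u s t where u: "u \<in> ?conic" and st: "(s, t) \<noteq> (0, 0)"
      and x: "x = proj (s *s V + t *s (L *v u))"
      unfolding join_def by blast
    have "s *s V + t *s (L *v u) \<noteq> 0"
    proof
      assume "s *s V + t *s (L *v u) = 0"
      then have "vec4 (t*u$0) (t*u$2/\<alpha> - s*\<beta>) (s*\<alpha>) (t*u$1) = 0"
        by (simp only: comb)
      then have "s = 0" "t*u$0 = 0" "t*u$1 = 0" "t*u$2/\<alpha> = 0"
        using assms by (simp_all add: vec4_eq_iff)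
      moreover have "t \<noteq> 0"
        using st \<open>s = 0\<close> by simp
      ultimately have "u = 0"
        using assms by (simp add: vec3_eq_iff)
      with u show False
        by simp
    qed
    moreover have "?Q (s *s V + t *s (L *v u)) = 0"
      using u by (simp add: Q_comb)
    ultimately show "x \<in> pts (\<lambda>v. ?Q v = 0)"
      unfolding pts_def x by blast
  qed
  moreover have "inj (\<lambda>u. L *v u)"
    by (rule injI) (use assms in \<open>simp add: L vec4_eq_iff vec3_eq_iff\<close>)
  moreover have "\<forall>u. L *v u \<noteq> V"
    using assms by (simp add: L V_def vec4_eq_iff)
  ultimately show ?thesis
    unfolding is_quadratic_cone_def by (intro exI[of _ L] exI[of _ V]) simp
qed

lemma Qform_product:
  "Qform (\<alpha>*\<gamma>) (\<beta>*\<delta>) (\<alpha>*\<delta> + \<beta>*\<gamma>) 0 0 0 w = (\<alpha>*w$1 + \<beta>*w$2) * (\<gamma>*w$1 + \<delta>*w$2) - w$3*w$0"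
  by (simp add: Qform_def algebra_simps power2_eq_square)

text \<open>The coordinate change \<open>N = M\<^sup>-\<^sup>1\<close> takes \<open>Q\<close> to \<open>X\<^sub>0 X\<^sub>1 + X\<^sub>2 X\<^sub>3\<close>.\<close>
lemma is_hyperbolic_quadric_Qform_product:
  fixes \<alpha> \<beta> \<gamma> \<delta> :: "'a::field"
  assumes "\<alpha>*\<delta> - \<beta>*\<gamma> \<noteq> 0"
  shows "is_hyperbolic_quadric (pts (\<lambda>v. Qform (\<alpha>*\<gamma>) (\<beta>*\<delta>) (\<alpha>*\<delta> + \<beta>*\<gamma>) 0 0 0 v = 0))"
proof -
  let ?Q = "Qform (\<alpha>*\<gamma>) (\<beta>*\<delta>) (\<alpha>*\<delta> + \<beta>*\<gamma>) 0 0 0"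
  let ?H = "\<lambda>v::'a^4. v$0 * v$1 + v$2 * v$3"
  define \<Delta> where "\<Delta> = \<alpha>*\<delta> - \<beta>*\<gamma>"
  define M :: "'a^4^4" where "M = (\<chi> i j. if i = 0 \<and> j = 2 then 1
      else if i = 1 \<and> j = 0 then \<delta>/\<Delta> else if i = 1 \<and> j = 1 then -\<beta>/\<Delta>
      else if i = 2 \<and> j = 0 then -\<gamma>/\<Delta> else if i = 2 \<and> j = 1 then \<alpha>/\<Delta>
      else if i = 3 \<and> j = 3 then -1 else 0)"
  define N :: "'a^4 \<Rightarrow> 'a^4" where
    "N w = vec4 (\<alpha>*w$1 + \<beta>*w$2) (\<gamma>*w$1 + \<delta>*w$2) (w$0) (-w$3)" for w
  have M: "M *v v = vec4 (v$2) ((\<delta>* v$0 - \<beta>* v$1)/\<Delta>) ((\<alpha>* v$1 - \<gamma>* v$0)/\<Delta>) (-v$3)" for v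
    by (simp add: vec4_eq_iff M_def matrix_vector_mult_def sum_4_zero_based diff_divide_distrib)
  have "\<Delta> \<noteq> 0"
    using assms by (simp add: \<Delta>_def)
  have MN: "M *v N w = w" for w
    using \<open>\<Delta> \<noteq> 0\<close> by (simp add: M N_def vec4_eq_iff field_simps) (simp add: \<Delta>_def algebra_simps)
  have NM: "N (M *v v) = v" for v
    using \<open>\<Delta> \<noteq> 0\<close> by (simp add: M N_def vec4_eq_iff field_simps) (simp add: \<Delta>_def algebra_simps)
  have Q_eq: "?Q w = ?H (N w)" for w
    by (simp add: Qform_product N_def algebra_simps)
  have "pts (\<lambda>v. ?Q v = 0) = {proj (M *v v) | v. v \<noteq> 0 \<and> ?H v = 0}"
  proof (intro equalityI subsetI)
    fix x assume "x \<in> pts (\<lambda>v. ?Q v = 0)"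
    then obtain w where "x = proj w" "w \<noteq> 0" "?Q w = 0"
      unfolding pts_def by blast
    then show "x \<in> {proj (M *v v) | v. v \<noteq> 0 \<and> ?H v = 0}"
      using MN[of w] Q_eq[of w] by (metis (mono_tags, lifting) matrix_vector_mult_0_right mem_Collect_eq)
  next
    fix x assume "x \<in> {proj (M *v v) | v. v \<noteq> 0 \<and> ?H v = 0}"
    then obtain v where "x = proj (M *v v)" "v \<noteq> 0" "?H v = 0"
      by blast
    moreover from this have "M *v v \<noteq> 0"
      using NM[of v] by (auto simp: N_def vec4_eq_iff)
    ultimately show "x \<in> pts (\<lambda>v. ?Q v = 0)"
      unfolding pts_def using Q_eq NM by auto
  qed
  moreover have "det M \<noteq> 0"
    using NM by (metis invertible_det_nz invertible_left_inverse matrix_left_invertible_injective injI)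
  ultimately show ?thesis
    unfolding is_hyperbolic_quadric_def by blast
qed

lemma C_infty_cases:
  fixes a b c d e f :: "'a::field"
  assumes "q > 0" "finite (UNIV :: 'a set)" "irreducible_qform (Qcoef a b c d e f)"
  shows "card (C_infty q a b c d e f) = 1 \<or>
    (card (C_infty q a b c d e f) = CARD('a) + 1 \<and> (\<exists>L. is_line L \<and> C_infty q a b c d e f \<subseteq> L)) \<or>
    (card (C_infty q a b c d e f) = 2 * CARD('a) + 1 \<and>
      (\<exists>L1 L2. is_line L1 \<and> is_line L2 \<and> C_infty q a b c d e f \<subseteq> L1 \<union> L2))"
proof -
  let ?S = "inf_slopes q a b c"
  have sub: "?S \<subseteq> {t. a*t^2 + c*t + b = 0}"
    by (auto simp: inf_slopes_def)
  have "\<not> (a = 0 \<and> b = 0 \<and> c = 0)"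
    using assms(3) irreducible_qform_Qcoef_iff by blast
  then have "finite {t. a*t^2 + c*t + b = 0}" "card {t. a*t^2 + c*t + b = 0} \<le> 2"
    using card_quadratic_roots_le_2 by blast+
  then have "finite ?S" "card ?S \<le> 2"
    using finite_subset[OF sub] card_mono[OF _ sub] by fastforce+
  consider "card ?S = 0" | "card ?S = 1" | "card ?S = 2"
    using \<open>card ?S \<le> 2\<close> by linarith
  then show ?thesis
  proof cases
    case 1
    then have "?S = {}"
      using \<open>finite ?S\<close> by simp
    then show ?thesis
      using C_infty_no_slope assms(1) by blast
  next
    case 2
    then obtain t where "?S = {t}"
      by (rule card_1_singletonE)
    then show ?thesis
      using C_infty_one_slope assms(1,2) by blast
  next
    case 3
    then obtain t1 t2 where "?S = {t1, t2}" "t1 \<noteq> t2"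
      by (meson card_2_iff)
    then show ?thesis
      using C_infty_two_slopes assms(1,2) by blast
  qed
qed

lemma C_infty_quadratic_cone_cases:
  fixes a b c d e f :: "'a::field"
  assumes "q > 0" "finite (UNIV :: 'a set)" "irreducible_qform (Qcoef a b c d e f)"
    and "is_quadratic_cone (pts (\<lambda>v. Qform a b c d e f v = 0))" and "(2::'a) = 0"
  shows "card (C_infty q a b c d e f) = 1 \<or>
    (card (C_infty q a b c d e f) = CARD('a) + 1 \<and> (\<exists>L. is_line L \<and> C_infty q a b c d e f \<subseteq> L))"
proof -
  let ?S = "inf_slopes q a b c"
  have "c = 0"
    using c_eq_0_if_Qform_quadratic_cone_char_2 assms(4,5) .
  then have "?S \<subseteq> {t. a*t^2 + b = 0}" "\<not> (a = 0 \<and> b = 0)"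
    using assms(3) by (auto simp: inf_slopes_def irreducible_qform_Qcoef_iff)
  moreover have "finite {t. a*t^2 + b = 0}"
    using finite_subset[OF subset_UNIV assms(2)] .
  ultimately have "card ?S \<le> 1"
    using card_char_2_roots_le_1[OF assms(5)] card_mono by (meson order.trans)
  then consider "card ?S = 0" | "card ?S = 1"
    by linarith
  then show ?thesis
  proof cases
    case 1
    then have "?S = {}"
      using finite_subset[OF subset_UNIV assms(2)] by simp
    then show ?thesis
      using C_infty_no_slope assms(1) by blast
  next
    case 2
    then obtain t where "?S = {t}"
      by (rule card_1_singletonE)
    then show ?thesis
      using C_infty_one_slope assms(1,2) by blast
  qed
qed

lemma inf_slopes_char_2:
  assumes "(2::'a::field) = 0"
  shows "inf_slopes q a b c = {t::'a. a*t^2 + c*t + b = 0 \<and> t^(q+1) = 1}"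
  using char_2_add_eq_0_iff[OF assms] by (simp add: inf_slopes_def)

lemma inf_slopes_examples_char_2:
  assumes "(2::'a::field) = 0" "t0^(q+1) = (1::'a)"
  shows "inf_slopes q (1::'a) 1 0 = {1}" "inf_slopes q (0::'a) 1 1 = {1}"
    "inf_slopes q (1::'a) t0 (t0 + 1) = {1, t0}"
proof -
  have "t^2 + 1 = (t + 1)^2" "t^2 + (t0 + 1)*t + t0 = (t + 1) * (t + t0)" for t :: 'a
    using assms(1) by (simp_all add: algebra_simps power2_eq_square)
  then show "inf_slopes q (1::'a) 1 0 = {1}" "inf_slopes q (0::'a) 1 1 = {1}"
    "inf_slopes q (1::'a) t0 (t0 + 1) = {1, t0}"
    using assms by (auto simp: inf_slopes_char_2 char_2_add_eq_0_iff)
qed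

theorem lemma2:
  fixes q h :: nat
  assumes "finite (UNIV :: 'a::field set)"
    and "h \<ge> 1" and "q = 2 ^ h"
    and "CARD('a) = q ^ 2"
  shows
   "(\<forall>a b c d e f :: 'a. irreducible_qform (Qcoef a b c d e f) \<longrightarrow>
       (is_quadratic_cone (pts (\<lambda>v. Qform a b c d e f v = 0)) \<longrightarrow>
          card (C_infty q a b c d e f) = 1 \<or>
          (card (C_infty q a b c d e f) = q^2 + 1 \<and>
             (\<exists>L. is_line L \<and> C_infty q a b c d e f \<subseteq> L))) \<and>
       (is_hyperbolic_quadric (pts (\<lambda>v. Qform a b c d e f v = 0)) \<longrightarrow>
          card (C_infty q a b c d e f) = 1 \<or>
          (card (C_infty q a b c d e f) = q^2 + 1 \<and>
             (\<exists>L. is_line L \<and> C_infty q a b c d e f \<subseteq> L)) \<or>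
          (card (C_infty q a b c d e f) = 2 * q^2 + 1 \<and>
             (\<exists>L1 L2. is_line L1 \<and> is_line L2 \<and> C_infty q a b c d e f \<subseteq> L1 \<union> L2))))
    \<and> (\<exists>a b c d e f :: 'a. irreducible_qform (Qcoef a b c d e f) \<and>
          is_quadratic_cone (pts (\<lambda>v. Qform a b c d e f v = 0)) \<and>
          card (C_infty q a b c d e f) = 1)
    \<and> (\<exists>a b c d e f :: 'a. irreducible_qform (Qcoef a b c d e f) \<and>
          is_quadratic_cone (pts (\<lambda>v. Qform a b c d e f v = 0)) \<and>
          card (C_infty q a b c d e f) = q^2 + 1 \<and>
          (\<exists>L. is_line L \<and> C_infty q a b c d e f \<subseteq> L))
    \<and> (\<exists>a b c d e f :: 'a. irreducible_qform (Qcoef a b c d e f) \<and>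
          is_hyperbolic_quadric (pts (\<lambda>v. Qform a b c d e f v = 0)) \<and>
          card (C_infty q a b c d e f) = 1)
    \<and> (\<exists>a b c d e f :: 'a. irreducible_qform (Qcoef a b c d e f) \<and>
          is_hyperbolic_quadric (pts (\<lambda>v. Qform a b c d e f v = 0)) \<and>
          card (C_infty q a b c d e f) = q^2 + 1 \<and>
          (\<exists>L. is_line L \<and> C_infty q a b c d e f \<subseteq> L))
    \<and> (\<exists>a b c d e f :: 'a. irreducible_qform (Qcoef a b c d e f) \<and>
          is_hyperbolic_quadric (pts (\<lambda>v. Qform a b c d e f v = 0)) \<and>
          card (C_infty q a b c d e f) = 2 * q^2 + 1 \<and>
          (\<exists>L1 L2. is_line L1 \<and> is_line L2 \<and> C_infty q a b c d e f \<subseteq> L1 \<union> L2))"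
proof -
  have "q \<ge> 2"
    using assms(2,3) by (metis power_increasing[of 1 h 2] power_one_right one_le_numeral)
  then have "q > 0"
    by simp
  have "CARD('a) = 2 ^ (h * 2)"
    using assms(3,4) by (simp add: power_mult)
  then have two: "(2::'a) = 0"
    by (rule two_eq_0_if_card_eq_power_2[OF assms(1)])
  obtain t0 :: 'a where t0: "t0^(q+1) = 1" "t0 \<noteq> 1"
    using exists_norm_1_ne_1 assms(1,4) \<open>q \<ge> 2\<close> by blast
  have irr: "irreducible_qform (Qcoef (1::'a) b c d e f)" "irreducible_qform (Qcoef (a::'a) b 1 d e f)"
    for a b c d e f
    by (simp_all add: irreducible_qform_Qcoef_iff)
  have cones: "is_quadratic_cone (pts (\<lambda>v. Qform (1::'a) 0 0 0 0 0 v = 0))"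
    "is_quadratic_cone (pts (\<lambda>v. Qform (1::'a) 1 0 0 0 0 v = 0))"
    using is_quadratic_cone_Qform_square[of "1::'a" 0] is_quadratic_cone_Qform_square[of "1::'a" 1] two
    by simp_all
  have hyps: "is_hyperbolic_quadric (pts (\<lambda>v. Qform (0::'a) 0 1 0 0 0 v = 0))"
    "is_hyperbolic_quadric (pts (\<lambda>v. Qform (0::'a) 1 1 0 0 0 v = 0))"
    "is_hyperbolic_quadric (pts (\<lambda>v. Qform (1::'a) t0 (t0 + 1) 0 0 0 v = 0))"
    using is_hyperbolic_quadric_Qform_product[of "1::'a" 1 0 0] is_hyperbolic_quadric_Qform_product[of "0::'a" 1 1 1]
      is_hyperbolic_quadric_Qform_product[of "1::'a" t0 1 1] t0(2)
    by (simp_all add: add.commute)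
  have no_slopes: "inf_slopes q (1::'a) 0 0 = {}" "inf_slopes q (0::'a) 0 1 = {}"
    by (auto simp: inf_slopes_def)
  note slopes = inf_slopes_examples_char_2[OF two t0(1)]
  note one_slope = C_infty_one_slope[OF \<open>q > 0\<close> assms(1)]
  show ?thesis
    unfolding assms(4)[symmetric]
    apply (intro conjI allI impI)
    subgoal using C_infty_quadratic_cone_cases[OF \<open>q > 0\<close> assms(1) _ _ two] by blast
    subgoal using C_infty_cases[OF \<open>q > 0\<close> assms(1)] by blast
    subgoal using irr(1) cones(1) C_infty_no_slope[OF \<open>q > 0\<close> no_slopes(1), where d=0 and e=0 and f=0] by blast
    subgoal using irr(1) cones(2) one_slope[OF slopes(1), where d=0 and e=0 and f=0] by blast
    subgoal using irr(2) hyps(1) C_infty_no_slope[OF \<open>q > 0\<close> no_slopes(2), where d=0 and e=0 and f=0] by blast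
    subgoal using irr(2) hyps(2) one_slope[OF slopes(2), where d=0 and e=0 and f=0] by blast
    subgoal using irr(1) hyps(3) C_infty_two_slopes[OF \<open>q > 0\<close> assms(1) slopes(3) t0(2)[symmetric], where d=0 and e=0 and f=0] by blast
    done
qed

end
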